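(* Let $A$ and $B$ be integral domains, and assume that the ring $A \times B$ has more than one unit. Then the factroids of $A \times B$ are precisely the subgroups of the form $F \times G$, where $F$ is a factroid of $A$ and $G$ is a factroid of $B$.
   Context: For a ring $R$, $\mathrm{reg}(R)$ is the set of (left) nonzerodivisors of $R$. A factroid of $R$ is an additive subgroup $F$ of $R$ such that for all $a\in R$ and $b\in\mathrm{reg}(R)$, $ba\in F$ implies $a\in F$. *)

theory Defs
  imports "HOL-Algebra.Algebra"
begin

definition reg :: "('a, 'm) ring_scheme \<Rightarrow> 'a set" where
  "reg R = {b \<in> carrier R. \<forall>a \<in> carrier R. b \<otimes>\<^bsub>R\<^esub> a = \<zero>\<^bsub>R\<^esub> \<longrightarrow> a = \<zero>\<^bsub>R\<^esub>}"

definition factroid :: "('a, 'm) ring_scheme \<Rightarrow> 'a set \<Rightarrow> bool" where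
  "factroid R F \<longleftrightarrow> subgroup F (add_monoid R) \<and>
     (\<forall>a \<in> carrier R. \<forall>b \<in> reg R. b \<otimes>\<^bsub>R\<^esub> a \<in> F \<longrightarrow> a \<in> F)"

end

theory Submission
  imports Defs
begin

text \<open>
  If \<open>u, v\<close> are units of a ring, then \<open>(u \<ominus> v) \<otimes> h\<close> lies in every factroid containing \<open>h\<close>,
  since a factroid is closed under multiplication by units. Two distinct units of \<open>A \<times> B\<close>
  differ in a coordinate, say \<open>u\<^sub>1 \<noteq> v\<^sub>1\<close>; taking \<open>u = (u\<^sub>1, \<one>)\<close> and \<open>v = (v\<^sub>1, \<one>)\<close> gives
  \<open>((u\<^sub>1 \<ominus> v\<^sub>1) \<otimes> a, \<zero>) = (u\<^sub>1 \<ominus> v\<^sub>1, \<one>) \<otimes> (a, \<zero>) \<in> H\<close> for \<open>(a, b) \<in> H\<close>, and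
  \<open>(u\<^sub>1 \<ominus> v\<^sub>1, \<one>)\<close> is regular because \<open>A\<close> is a domain. So \<open>(a, \<zero>) \<in> H\<close>, and \<open>H\<close> is the
  product of its two coordinate slices, which are factroids since \<open>(r, \<one>)\<close> and \<open>(\<one>, r)\<close>
  are regular for regular \<open>r\<close>.
\<close>

lemma RDirProd_mult [simp]: "(a, b) \<otimes>\<^bsub>RDirProd R S\<^esub> (c, d) = (a \<otimes>\<^bsub>R\<^esub> c, b \<otimes>\<^bsub>S\<^esub> d)"
  and RDirProd_add [simp]: "(a, b) \<oplus>\<^bsub>RDirProd R S\<^esub> (c, d) = (a \<oplus>\<^bsub>R\<^esub> c, b \<oplus>\<^bsub>S\<^esub> d)"
  and RDirProd_zero [simp]: "\<zero>\<^bsub>RDirProd R S\<^esub> = (\<zero>\<^bsub>R\<^esub>, \<zero>\<^bsub>S\<^esub>)"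
  and RDirProd_one [simp]: "\<one>\<^bsub>RDirProd R S\<^esub> = (\<one>\<^bsub>R\<^esub>, \<one>\<^bsub>S\<^esub>)"
  by (simp_all add: RDirProd_def DirProd_def monoid.defs)

lemma RDirProd_a_inv [simp]:
  assumes "ring R" "ring S" "a \<in> carrier R" "b \<in> carrier S"
  shows "\<ominus>\<^bsub>RDirProd R S\<^esub> (a, b) = (\<ominus>\<^bsub>R\<^esub> a, \<ominus>\<^bsub>S\<^esub> b)"
  using assms unfolding a_inv_def RDirProd_add_monoid
  by (intro inv_DirProd) (simp_all add: abelian_group.a_group ring.is_abelian_group)

lemma Units_RDirProd: "(x, y) \<in> Units (RDirProd R S) \<longleftrightarrow> x \<in> Units R \<and> y \<in> Units S"
  by (auto simp: Units_def RDirProd_carrier)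

lemma regI:
  "\<lbrakk>b \<in> carrier R; \<And>a. \<lbrakk>a \<in> carrier R; b \<otimes>\<^bsub>R\<^esub> a = \<zero>\<^bsub>R\<^esub>\<rbrakk> \<Longrightarrow> a = \<zero>\<^bsub>R\<^esub>\<rbrakk> \<Longrightarrow> b \<in> reg R"
  unfolding reg_def by blast

lemma regD:
  "\<lbrakk>b \<in> reg R; a \<in> carrier R; b \<otimes>\<^bsub>R\<^esub> a = \<zero>\<^bsub>R\<^esub>\<rbrakk> \<Longrightarrow> a = \<zero>\<^bsub>R\<^esub>"
  and reg_carrier: "b \<in> reg R \<Longrightarrow> b \<in> carrier R"
  unfolding reg_def by blast+

lemma reg_RDirProd:
  assumes "ring R" "ring S"
  shows "(x, y) \<in> reg (RDirProd R S) \<longleftrightarrow> x \<in> reg R \<and> y \<in> reg S"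
proof
  interpret R: ring R by fact
  interpret S: ring S by fact
  assume xy: "(x, y) \<in> reg (RDirProd R S)"
  then have x: "x \<in> carrier R" and y: "y \<in> carrier S"
    using reg_carrier by (force simp: RDirProd_carrier)+
  have zero: "a = \<zero>\<^bsub>R\<^esub> \<and> b = \<zero>\<^bsub>S\<^esub>"
    if "a \<in> carrier R" "b \<in> carrier S" "x \<otimes>\<^bsub>R\<^esub> a = \<zero>\<^bsub>R\<^esub>" "y \<otimes>\<^bsub>S\<^esub> b = \<zero>\<^bsub>S\<^esub>" for a b
    using regD[OF xy, of "(a, b)"] that by (simp add: RDirProd_carrier)
  show "x \<in> reg R \<and> y \<in> reg S"
  proof (intro conjI regI)
    fix a assume "a \<in> carrier R" "x \<otimes>\<^bsub>R\<^esub> a = \<zero>\<^bsub>R\<^esub>"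
    then show "a = \<zero>\<^bsub>R\<^esub>" using zero[of a "\<zero>\<^bsub>S\<^esub>"] S.r_null[OF y] by blast
  next
    fix b assume "b \<in> carrier S" "y \<otimes>\<^bsub>S\<^esub> b = \<zero>\<^bsub>S\<^esub>"
    then show "b = \<zero>\<^bsub>S\<^esub>" using zero[of "\<zero>\<^bsub>R\<^esub>" b] R.r_null[OF x] by blast
  qed (fact x y)+
next
  assume "x \<in> reg R \<and> y \<in> reg S"
  then show "(x, y) \<in> reg (RDirProd R S)"
    unfolding reg_def RDirProd_carrier by auto
qed

lemma (in ring) Units_subset_reg: "Units R \<subseteq> reg R"
proof (intro subsetI regI)
  fix w a assume w: "w \<in> Units R" and a: "a \<in> carrier R" "w \<otimes> a = \<zero>"
  have "a = inv w \<otimes> (w \<otimes> a)"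
    using w a(1) by (simp add: m_assoc[symmetric] Units_closed)
  then show "a = \<zero>" using w a by simp
qed (simp add: Units_closed)

lemma (in domain) reg_eq_nonzero: "reg R = carrier R - {\<zero>}"
proof (intro equalityI subsetI)
  fix b assume b: "b \<in> reg R"
  have "b \<noteq> \<zero>"
  proof
    assume "b = \<zero>"
    then show False using regD[OF b one_closed] one_not_zero by simp
  qed
  then show "b \<in> carrier R - {\<zero>}" using reg_carrier[OF b] by blast
next
  fix b assume b: "b \<in> carrier R - {\<zero>}"
  show "b \<in> reg R"
  proof (rule regI)
    fix a assume "a \<in> carrier R" "b \<otimes> a = \<zero>"
    then show "a = \<zero>" using integral b by blast
  qed (use b in blast)
qed

lemma factroid_additive_subgroup: "factroid R F \<Longrightarrow> additive_subgroup F R"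
  by (simp add: factroid_def additive_subgroupI)

lemma factroid_cancel:
  "\<lbrakk>factroid R F; a \<in> carrier R; b \<in> reg R; b \<otimes>\<^bsub>R\<^esub> a \<in> F\<rbrakk> \<Longrightarrow> a \<in> F"
  unfolding factroid_def by blast

lemma factroidI:
  assumes "additive_subgroup F R"
    and "\<And>a b. \<lbrakk>a \<in> carrier R; b \<in> reg R; b \<otimes>\<^bsub>R\<^esub> a \<in> F\<rbrakk> \<Longrightarrow> a \<in> F"
  shows "factroid R F"
  using assms by (simp add: factroid_def additive_subgroup.a_subgroup)

context ring
begin

lemma factroid_Units_mult:
  assumes F: "factroid R F" and w: "w \<in> Units R" and x: "x \<in> F"
  shows "w \<otimes> x \<in> F"
proof (rule factroid_cancel[OF F])
  have x_carrier: "x \<in> carrier R"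
    using additive_subgroup.a_subset[OF factroid_additive_subgroup[OF F]] x by blast
  then show "w \<otimes> x \<in> carrier R" using w by (simp add: Units_closed)
  show "inv w \<in> reg R" using Units_subset_reg Units_inv_Units[OF w] by blast
  have "inv w \<otimes> (w \<otimes> x) = x"
    using w x_carrier by (simp add: m_assoc[symmetric] Units_closed)
  with x show "inv w \<otimes> (w \<otimes> x) \<in> F" by simp
qed

lemma factroid_Units_diff_mult:
  assumes F: "factroid R F" and u: "u \<in> Units R" and v: "v \<in> Units R" and x: "x \<in> F"
  shows "(u \<ominus> v) \<otimes> x \<in> F"
proof -
  interpret F: additive_subgroup F R by (rule factroid_additive_subgroup[OF F])
  have "u \<in> carrier R" "v \<in> carrier R" "x \<in> carrier R"
    using u v x F.a_subset by auto
  then have "(u \<ominus> v) \<otimes> x = u \<otimes> x \<ominus> v \<otimes> x"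
    by (simp add: a_minus_def l_distr l_minus)
  also have "\<dots> \<in> F" unfolding a_minus_def
    using factroid_Units_mult[OF F u x] factroid_Units_mult[OF F v x]
    by (intro F.a_closed F.a_inv_closed)
  finally show ?thesis .
qed

end

lemma factroid_RDirProd_fst_zero:
  assumes R: "ring R" and S: "ring S" and H: "factroid (RDirProd R S) H"
    and u: "u \<in> Units R" and v: "v \<in> Units R" and uv: "u \<ominus>\<^bsub>R\<^esub> v \<in> reg R"
    and ab: "(a, b) \<in> H"
  shows "(a, \<zero>\<^bsub>S\<^esub>) \<in> H"
proof -
  interpret R: ring R by fact
  interpret S: ring S by fact
  interpret P: ring "RDirProd R S" by (rule RDirProd_ring[OF R S])
  have a: "a \<in> carrier R" and b: "b \<in> carrier S"
    using additive_subgroup.a_subset[OF factroid_additive_subgroup[OF H]] ab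
    by (auto simp: RDirProd_carrier)
  have "(u \<ominus>\<^bsub>R\<^esub> v, \<one>\<^bsub>S\<^esub>) \<otimes>\<^bsub>RDirProd R S\<^esub> (a, \<zero>\<^bsub>S\<^esub>)
      = ((u, \<one>\<^bsub>S\<^esub>) \<ominus>\<^bsub>RDirProd R S\<^esub> (v, \<one>\<^bsub>S\<^esub>)) \<otimes>\<^bsub>RDirProd R S\<^esub> (a, b)"
    using u v b by (simp add: R S R.Units_closed a_minus_def S.r_neg)
  also have "\<dots> \<in> H"
    using P.factroid_Units_diff_mult[OF H] u v ab by (simp add: Units_RDirProd)
  finally show ?thesis
  proof (rule factroid_cancel[OF H, rotated 2])
    show "(u \<ominus>\<^bsub>R\<^esub> v, \<one>\<^bsub>S\<^esub>) \<in> reg (RDirProd R S)"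
      using uv S.Units_subset_reg by (auto simp: reg_RDirProd[OF R S])
  qed (simp add: a RDirProd_carrier)
qed

lemma factroid_RDirProd_snd_zero:
  assumes R: "ring R" and S: "ring S" and H: "factroid (RDirProd R S) H"
    and u: "u \<in> Units S" and v: "v \<in> Units S" and uv: "u \<ominus>\<^bsub>S\<^esub> v \<in> reg S"
    and ab: "(a, b) \<in> H"
  shows "(\<zero>\<^bsub>R\<^esub>, b) \<in> H"
proof -
  interpret R: ring R by fact
  interpret S: ring S by fact
  interpret P: ring "RDirProd R S" by (rule RDirProd_ring[OF R S])
  have a: "a \<in> carrier R" and b: "b \<in> carrier S"
    using additive_subgroup.a_subset[OF factroid_additive_subgroup[OF H]] ab
    by (auto simp: RDirProd_carrier)
  have "(\<one>\<^bsub>R\<^esub>, u \<ominus>\<^bsub>S\<^esub> v) \<otimes>\<^bsub>RDirProd R S\<^esub> (\<zero>\<^bsub>R\<^esub>, b)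
      = ((\<one>\<^bsub>R\<^esub>, u) \<ominus>\<^bsub>RDirProd R S\<^esub> (\<one>\<^bsub>R\<^esub>, v)) \<otimes>\<^bsub>RDirProd R S\<^esub> (a, b)"
    using u v a by (simp add: R S S.Units_closed a_minus_def R.r_neg)
  also have "\<dots> \<in> H"
    using P.factroid_Units_diff_mult[OF H] u v ab by (simp add: Units_RDirProd)
  finally show ?thesis
  proof (rule factroid_cancel[OF H, rotated 2])
    show "(\<one>\<^bsub>R\<^esub>, u \<ominus>\<^bsub>S\<^esub> v) \<in> reg (RDirProd R S)"
      using uv R.Units_subset_reg by (auto simp: reg_RDirProd[OF R S])
  qed (simp add: b RDirProd_carrier)
qed

lemma additive_subgroup_RDirProd_fst_zero_iff_snd_zero:
  assumes R: "ring R" and S: "ring S" and H: "additive_subgroup H (RDirProd R S)"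
    and ab: "(a, b) \<in> H"
  shows "(a, \<zero>\<^bsub>S\<^esub>) \<in> H \<longleftrightarrow> (\<zero>\<^bsub>R\<^esub>, b) \<in> H"
proof -
  interpret R: ring R by fact
  interpret S: ring S by fact
  interpret H: additive_subgroup H "RDirProd R S" by fact
  have a: "a \<in> carrier R" and b: "b \<in> carrier S"
    using H.a_subset ab by (auto simp: RDirProd_carrier)
  have "(a, b) \<oplus>\<^bsub>RDirProd R S\<^esub> \<ominus>\<^bsub>RDirProd R S\<^esub> (a, \<zero>\<^bsub>S\<^esub>) = (\<zero>\<^bsub>R\<^esub>, b)"
    and "(a, b) \<oplus>\<^bsub>RDirProd R S\<^esub> \<ominus>\<^bsub>RDirProd R S\<^esub> (\<zero>\<^bsub>R\<^esub>, b) = (a, \<zero>\<^bsub>S\<^esub>)"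
    using a b by (simp_all add: R S R.r_neg S.r_neg)
  then show ?thesis using ab by (metis H.a_closed H.a_inv_closed)
qed

lemma additive_subgroup_RDirProd_eq_Times:
  assumes R: "ring R" and S: "ring S" and H: "additive_subgroup H (RDirProd R S)"
    and split: "\<And>a b. (a, b) \<in> H \<Longrightarrow> (a, \<zero>\<^bsub>S\<^esub>) \<in> H"
  shows "H = {a. (a, \<zero>\<^bsub>S\<^esub>) \<in> H} \<times> {b. (\<zero>\<^bsub>R\<^esub>, b) \<in> H}"
proof (intro equalityI subsetI)
  fix p assume "p \<in> H"
  then show "p \<in> {a. (a, \<zero>\<^bsub>S\<^esub>) \<in> H} \<times> {b. (\<zero>\<^bsub>R\<^esub>, b) \<in> H}"
    using split additive_subgroup_RDirProd_fst_zero_iff_snd_zero[OF R S H] by (cases p) blast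
next
  interpret R: ring R by fact
  interpret S: ring S by fact
  interpret H: additive_subgroup H "RDirProd R S" by fact
  fix p assume "p \<in> {a. (a, \<zero>\<^bsub>S\<^esub>) \<in> H} \<times> {b. (\<zero>\<^bsub>R\<^esub>, b) \<in> H}"
  then obtain a b where p: "p = (a, b)" and "(a, \<zero>\<^bsub>S\<^esub>) \<in> H" "(\<zero>\<^bsub>R\<^esub>, b) \<in> H"
    by blast
  moreover from this have "a \<in> carrier R" "b \<in> carrier S"
    using H.a_subset by (auto simp: RDirProd_carrier)
  ultimately show "p \<in> H"
    using H.a_closed[of "(a, \<zero>\<^bsub>S\<^esub>)" "(\<zero>\<^bsub>R\<^esub>, b)"] by simp
qed

lemma factroid_RDirProd_fst_slice:
  assumes R: "ring R" and S: "ring S" and H: "factroid (RDirProd R S) H"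
  shows "factroid R {a. (a, \<zero>\<^bsub>S\<^esub>) \<in> H}"
proof (rule factroidI)
  interpret R: ring R by fact
  interpret S: ring S by fact
  interpret H: additive_subgroup H "RDirProd R S" by (rule factroid_additive_subgroup[OF H])
  have carrier: "a \<in> carrier R" if "(a, \<zero>\<^bsub>S\<^esub>) \<in> H" for a
    using H.a_subset that by (auto simp: RDirProd_carrier)
  show "additive_subgroup {a. (a, \<zero>\<^bsub>S\<^esub>) \<in> H} R"
  proof (intro additive_subgroupI R.add.subgroupI)
    fix a assume "a \<in> {a. (a, \<zero>\<^bsub>S\<^esub>) \<in> H}"
    then show "\<ominus>\<^bsub>R\<^esub> a \<in> {a. (a, \<zero>\<^bsub>S\<^esub>) \<in> H}"
      using H.a_inv_closed[of "(a, \<zero>\<^bsub>S\<^esub>)"] carrier[of a] by (simp add: R S)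
  next
    fix a b assume "a \<in> {a. (a, \<zero>\<^bsub>S\<^esub>) \<in> H}" "b \<in> {a. (a, \<zero>\<^bsub>S\<^esub>) \<in> H}"
    then show "a \<oplus>\<^bsub>R\<^esub> b \<in> {a. (a, \<zero>\<^bsub>S\<^esub>) \<in> H}"
      using H.a_closed by fastforce
  qed (use carrier H.zero_closed in auto)
  fix a r assume "a \<in> carrier R" "r \<in> reg R" "r \<otimes>\<^bsub>R\<^esub> a \<in> {a. (a, \<zero>\<^bsub>S\<^esub>) \<in> H}"
  then show "a \<in> {a. (a, \<zero>\<^bsub>S\<^esub>) \<in> H}"
    using factroid_cancel[OF H, of "(a, \<zero>\<^bsub>S\<^esub>)" "(r, \<one>\<^bsub>S\<^esub>)"] S.Units_subset_reg
    by (auto simp: reg_RDirProd[OF R S] RDirProd_carrier)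
qed

lemma factroid_RDirProd_snd_slice:
  assumes R: "ring R" and S: "ring S" and H: "factroid (RDirProd R S) H"
  shows "factroid S {b. (\<zero>\<^bsub>R\<^esub>, b) \<in> H}"
proof (rule factroidI)
  interpret R: ring R by fact
  interpret S: ring S by fact
  interpret H: additive_subgroup H "RDirProd R S" by (rule factroid_additive_subgroup[OF H])
  have carrier: "b \<in> carrier S" if "(\<zero>\<^bsub>R\<^esub>, b) \<in> H" for b
    using H.a_subset that by (auto simp: RDirProd_carrier)
  show "additive_subgroup {b. (\<zero>\<^bsub>R\<^esub>, b) \<in> H} S"
  proof (intro additive_subgroupI S.add.subgroupI)
    fix b assume "b \<in> {b. (\<zero>\<^bsub>R\<^esub>, b) \<in> H}"
    then show "\<ominus>\<^bsub>S\<^esub> b \<in> {b. (\<zero>\<^bsub>R\<^esub>, b) \<in> H}"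
      using H.a_inv_closed[of "(\<zero>\<^bsub>R\<^esub>, b)"] carrier[of b] by (simp add: R S)
  next
    fix a b assume "a \<in> {b. (\<zero>\<^bsub>R\<^esub>, b) \<in> H}" "b \<in> {b. (\<zero>\<^bsub>R\<^esub>, b) \<in> H}"
    then show "a \<oplus>\<^bsub>S\<^esub> b \<in> {b. (\<zero>\<^bsub>R\<^esub>, b) \<in> H}"
      using H.a_closed by fastforce
  qed (use carrier H.zero_closed in auto)
  fix b r assume "b \<in> carrier S" "r \<in> reg S" "r \<otimes>\<^bsub>S\<^esub> b \<in> {b. (\<zero>\<^bsub>R\<^esub>, b) \<in> H}"
  then show "b \<in> {b. (\<zero>\<^bsub>R\<^esub>, b) \<in> H}"
    using factroid_cancel[OF H, of "(\<zero>\<^bsub>R\<^esub>, b)" "(\<one>\<^bsub>R\<^esub>, r)"] R.Units_subset_reg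
    by (auto simp: reg_RDirProd[OF R S] RDirProd_carrier)
qed

lemma factroid_RDirProd_Times:
  assumes R: "ring R" and S: "ring S" and F: "factroid R F" and G: "factroid S G"
  shows "factroid (RDirProd R S) (F \<times> G)"
proof (rule factroidI)
  have "subgroup (F \<times> G) (add_monoid R \<times>\<times> add_monoid S)"
    using F G unfolding factroid_def
    by (intro DirProd_subgroups abelian_group.a_group ring.is_abelian_group R S) simp_all
  then show "additive_subgroup (F \<times> G) (RDirProd R S)"
    by (intro additive_subgroupI) (simp only: RDirProd_add_monoid)
  fix p q assume p: "p \<in> carrier (RDirProd R S)" and q: "q \<in> reg (RDirProd R S)"
    and qp: "q \<otimes>\<^bsub>RDirProd R S\<^esub> p \<in> F \<times> G"
  obtain a b c d where "p = (a, b)" "q = (c, d)" by fastforce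
  with p q qp show "p \<in> F \<times> G"
    using factroid_cancel[OF F] factroid_cancel[OF G]
    by (auto simp: reg_RDirProd[OF R S] RDirProd_carrier)
qed

lemma factroid_RDirProd_domains_fst_zero:
  assumes A: "domain A" and B: "domain B" and H: "factroid (RDirProd A B) H"
    and units: "\<exists>u \<in> Units (RDirProd A B). \<exists>v \<in> Units (RDirProd A B). u \<noteq> v"
    and ab: "(a, b) \<in> H"
  shows "(a, \<zero>\<^bsub>B\<^esub>) \<in> H"
proof -
  interpret A: domain A by fact
  interpret B: domain B by fact
  obtain u\<^sub>1 u\<^sub>2 v\<^sub>1 v\<^sub>2 where u: "u\<^sub>1 \<in> Units A" "u\<^sub>2 \<in> Units B"
    and v: "v\<^sub>1 \<in> Units A" "v\<^sub>2 \<in> Units B" and uv: "(u\<^sub>1, u\<^sub>2) \<noteq> (v\<^sub>1, v\<^sub>2)"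
    using units by (metis Units_RDirProd prod.collapse)
  show ?thesis
  proof (cases "u\<^sub>1 = v\<^sub>1")
    case False
    with u v have "u\<^sub>1 \<ominus>\<^bsub>A\<^esub> v\<^sub>1 \<in> reg A"
      by (simp add: A.reg_eq_nonzero A.Units_closed)
    with u v show ?thesis
      by (intro factroid_RDirProd_fst_zero[OF A.ring_axioms B.ring_axioms H _ _ _ ab])
  next
    case True
    with uv u v have "u\<^sub>2 \<ominus>\<^bsub>B\<^esub> v\<^sub>2 \<in> reg B"
      by (simp add: B.reg_eq_nonzero B.Units_closed)
    with u v have "(\<zero>\<^bsub>A\<^esub>, b) \<in> H"
      by (intro factroid_RDirProd_snd_zero[OF A.ring_axioms B.ring_axioms H _ _ _ ab])
    then show ?thesis
      using additive_subgroup_RDirProd_fst_zero_iff_snd_zero[OF A.ring_axioms B.ring_axioms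
          factroid_additive_subgroup[OF H] ab] by blast
  qed
qed

theorem theorem4p19:
  fixes A :: "('a, 'm) ring_scheme" and B :: "('b, 'n) ring_scheme"
  assumes "domain A" and "domain B"
    and "\<exists>u \<in> Units (RDirProd A B). \<exists>v \<in> Units (RDirProd A B). u \<noteq> v"
  shows "factroid (RDirProd A B) H \<longleftrightarrow>
           (\<exists>F G. factroid A F \<and> factroid B G \<and> H = F \<times> G)"
proof -
  have A: "ring A" and B: "ring B"
    using assms(1,2) by (simp_all add: cring.axioms(1) domain.axioms(1))
  show ?thesis
  proof
    assume H: "factroid (RDirProd A B) H"
    have "H = {a. (a, \<zero>\<^bsub>B\<^esub>) \<in> H} \<times> {b. (\<zero>\<^bsub>A\<^esub>, b) \<in> H}"
      using additive_subgroup_RDirProd_eq_Times[OF A B factroid_additive_subgroup[OF H]]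
        factroid_RDirProd_domains_fst_zero[OF assms(1,2) H assms(3)] by blast
    then show "\<exists>F G. factroid A F \<and> factroid B G \<and> H = F \<times> G"
      using factroid_RDirProd_fst_slice[OF A B H] factroid_RDirProd_snd_slice[OF A B H] by blast
  qed (use factroid_RDirProd_Times[OF A B] in blast)
qed

end
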